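(* Let $X$ be a connected non-bipartite graph with $n$ vertices and $m>n$ edges, and let $\{a,b\}\ne\{\alpha,\beta\}$ be edges of $X$. If $\mathbf f_{ab}$ and $\mathbf f_{\alpha\beta}$ are strongly cospectral with respect to the adjacency matrix of the line graph $\mathcal L(X)$, then the graph obtained from $X$ by deleting the edges $\{a,b\}$ and $\{\alpha,\beta\}$ is either disconnected or bipartite.
   Context: The line graph $\mathcal L(X)$ has vertex set $E(X)$ with edges adjacent iff they share an endpoint; $\mathbf f_{ab}$ is the vertex state of the vertex corresponding to $\{a,b\}$. For $M=\sum_\theta\theta F_\theta$ (orthogonal spectral projections), vectors $\mathbf x,\mathbf y$ are strongly cospectral if $F_\theta\mathbf x=\pm F_\theta\mathbf y$ for every eigenvalue $\theta$. *)

theory Defs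
  imports Complex_Main
begin

definition simple_graph :: "'a set \<Rightarrow> 'a set set \<Rightarrow> bool" where
  "simple_graph V E \<longleftrightarrow> finite V \<and> (\<forall>e\<in>E. e \<subseteq> V \<and> card e = 2)"

definition adj :: "'a set set \<Rightarrow> 'a \<Rightarrow> 'a \<Rightarrow> bool" where
  "adj E u v \<longleftrightarrow> {u, v} \<in> E"

definition connected_graph :: "'a set \<Rightarrow> 'a set set \<Rightarrow> bool" where
  "connected_graph V E \<longleftrightarrow> V \<noteq> {} \<and> (\<forall>u\<in>V. \<forall>v\<in>V. (adj E)\<^sup>*\<^sup>* u v)"

definition bipartite_graph :: "'a set \<Rightarrow> 'a set set \<Rightarrow> bool" where
  "bipartite_graph V E \<longleftrightarrow> (\<exists>c :: 'a \<Rightarrow> bool. \<forall>u\<in>V. \<forall>v\<in>V. {u, v} \<in> E \<longrightarrow> c u \<noteq> c v)"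

definition line_adj :: "'a set set \<Rightarrow> 'a set \<Rightarrow> 'a set \<Rightarrow> real" where
  "line_adj E e f = (if e \<in> E \<and> f \<in> E \<and> e \<noteq> f \<and> e \<inter> f \<noteq> {} then 1 else 0)"

text \<open>Real vectors indexed by a finite set I are functions vanishing outside I.\<close>
definition eigenspace_on :: "'i set \<Rightarrow> ('i \<Rightarrow> 'i \<Rightarrow> real) \<Rightarrow> real \<Rightarrow> ('i \<Rightarrow> real) set" where
  "eigenspace_on I M \<theta> = {x. (\<forall>i. i \<notin> I \<longrightarrow> x i = 0) \<and>
       (\<forall>i\<in>I. (\<Sum>j\<in>I. M i j * x j) = \<theta> * x i)}"

definition is_eigenvalue_on :: "'i set \<Rightarrow> ('i \<Rightarrow> 'i \<Rightarrow> real) \<Rightarrow> real \<Rightarrow> bool" where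
  "is_eigenvalue_on I M \<theta> \<longleftrightarrow> (\<exists>x\<in>eigenspace_on I M \<theta>. x \<noteq> (\<lambda>_. 0))"

definition orth_proj :: "'i set \<Rightarrow> ('i \<Rightarrow> real) set \<Rightarrow> ('i \<Rightarrow> real) \<Rightarrow> ('i \<Rightarrow> real)" where
  "orth_proj I W y = (THE p. p \<in> W \<and> (\<forall>w\<in>W. (\<Sum>i\<in>I. (y i - p i) * w i) = 0))"

definition spectral_proj :: "'i set \<Rightarrow> ('i \<Rightarrow> 'i \<Rightarrow> real) \<Rightarrow> real \<Rightarrow> ('i \<Rightarrow> real) \<Rightarrow> ('i \<Rightarrow> real)" where
  "spectral_proj I M \<theta> = orth_proj I (eigenspace_on I M \<theta>)"

definition strongly_cospectral :: "'i set \<Rightarrow> ('i \<Rightarrow> 'i \<Rightarrow> real) \<Rightarrow> ('i \<Rightarrow> real) \<Rightarrow> ('i \<Rightarrow> real) \<Rightarrow> bool" where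
  "strongly_cospectral I M x y \<longleftrightarrow>
     (\<forall>\<theta>. is_eigenvalue_on I M \<theta> \<longrightarrow>
        spectral_proj I M \<theta> x = spectral_proj I M \<theta> y \<or>
        spectral_proj I M \<theta> x = (\<lambda>i. - spectral_proj I M \<theta> y i))"

definition vertex_state :: "'i \<Rightarrow> ('i \<Rightarrow> real)" where
  "vertex_state e = (\<lambda>f. if f = e then 1 else 0)"

end

theory Submission
  imports Defs
begin

text \<open>Let \<open>N\<close> be the unsigned vertex-edge incidence matrix of \<open>X\<close>. The adjacency matrix of the
  line graph is \<open>N\<^sup>T N - 2I\<close>, so every edge weighting in the kernel of \<open>N\<close> is an eigenvector
  for \<open>-2\<close>. If \<open>X\<close> minus the two edges were connected and non-bipartite, its incidence matrix
  would be onto, so \<open>e\<^sub>a + e\<^sub>b = N u\<close> for a weighting \<open>u\<close> vanishing on both edges. Then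
  \<open>f\<^sub>a\<^sub>b - u\<close> is a \<open>-2\<close> eigenvector taking the value 1 at \<open>ab\<close> and 0 at \<open>\<alpha>\<beta>\<close>, whereas strongly
  cospectral vertex states see every eigenvector with the same absolute value.\<close>

definition subspace_on :: "'i set \<Rightarrow> ('i \<Rightarrow> real) set \<Rightarrow> bool" where
  "subspace_on I W \<longleftrightarrow> (\<forall>x\<in>W. \<forall>i. i \<notin> I \<longrightarrow> x i = 0) \<and> (\<lambda>_. 0) \<in> W \<and>
     (\<forall>x\<in>W. \<forall>y\<in>W. \<forall>c. (\<lambda>i. x i + c * y i) \<in> W)"

definition inner_on :: "'i set \<Rightarrow> ('i \<Rightarrow> real) \<Rightarrow> ('i \<Rightarrow> real) \<Rightarrow> real" where
  "inner_on I x y = (\<Sum>i\<in>I. x i * y i)"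

lemma subspace_on_lincomb:
  "subspace_on I W \<Longrightarrow> x \<in> W \<Longrightarrow> y \<in> W \<Longrightarrow> (\<lambda>i. x i + c * y i) \<in> W"
  unfolding subspace_on_def by blast

lemma subspace_on_diff:
  assumes "subspace_on I W" "x \<in> W" "y \<in> W"
  shows "(\<lambda>i. x i - c * y i) \<in> W"
  using subspace_on_lincomb[OF assms, of "- c"] by simp

lemma inner_on_diff_left: "inner_on I (\<lambda>i. x i - c * z i) w = inner_on I x w - c * inner_on I z w"
  by (simp add: inner_on_def algebra_simps sum_subtractf sum_distrib_left)

lemma inner_on_add_right: "inner_on I x (\<lambda>i. y i + c * z i) = inner_on I x y + c * inner_on I x z"
  by (simp add: inner_on_def algebra_simps sum.distrib sum_distrib_left)

lemma inner_on_self_pos: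
  assumes "finite I" "i \<in> I" "x i \<noteq> 0"
  shows "inner_on I x x > 0"
proof -
  have "inner_on I x x = x i * x i + inner_on (I - {i}) x x"
    unfolding inner_on_def using assms(1,2) by (simp add: sum.remove)
  moreover have "inner_on (I - {i}) x x \<ge> 0" unfolding inner_on_def by (auto intro: sum_nonneg)
  moreover have "x i * x i > 0" using assms(3) by (metis not_real_square_gt_zero)
  ultimately show ?thesis by linarith
qed

text \<open>If \<open>u\<close> spans the orthogonal complement of the hyperplane \<open>{w \<in> W. w i = 0}\<close> in \<open>W\<close>,
  the projection onto \<open>W\<close> is the projection onto the hyperplane plus a multiple of \<open>u\<close>.\<close>

lemma orth_proj_exists_extend:
  assumes "finite I" "i \<in> I" and W: "subspace_on I W"
    and p0: "p0 \<in> W" "\<forall>w\<in>W. w i = 0 \<longrightarrow> inner_on I (\<lambda>k. y k - p0 k) w = 0"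
    and u: "u \<in> W" "u i \<noteq> 0" "\<forall>w\<in>W. w i = 0 \<longrightarrow> inner_on I u w = 0"
  shows "\<exists>p\<in>W. \<forall>w\<in>W. inner_on I (\<lambda>k. y k - p k) w = 0"
proof
  define t where "t = inner_on I (\<lambda>k. y k - p0 k) u / inner_on I u u"
  define p where "p = (\<lambda>k. p0 k + t * u k)"
  show "p \<in> W" unfolding p_def using subspace_on_lincomb[OF W p0(1) u(1)] .
  have yp: "(\<lambda>k. y k - p k) = (\<lambda>k. (y k - p0 k) - t * u k)"
    by (simp add: p_def algebra_simps)
  have orth_u: "inner_on I (\<lambda>k. y k - p k) u = 0"
    using inner_on_self_pos[of I i u, OF assms(1,2) u(2)] unfolding yp inner_on_diff_left t_def by simp
  show "\<forall>w\<in>W. inner_on I (\<lambda>k. y k - p k) w = 0"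
  proof
    fix w assume w: "w \<in> W"
    define c where "c = w i / u i"
    define w0 where "w0 = (\<lambda>k. w k - c * u k)"
    have "w0 \<in> W" unfolding w0_def using subspace_on_diff[OF W w u(1)] .
    moreover have "w0 i = 0" unfolding w0_def c_def using u(2) by simp
    ultimately have orth_w0: "inner_on I (\<lambda>k. y k - p k) w0 = 0"
      using p0(2) u(3) unfolding yp inner_on_diff_left by simp
    have "w = (\<lambda>k. w0 k + c * u k)" unfolding w0_def by simp
    then show "inner_on I (\<lambda>k. y k - p k) w = 0"
      by (simp only: inner_on_add_right orth_w0 orth_u mult_zero_right add_0)
  qed
qed

lemma orth_proj_exists:
  assumes "finite I" "subspace_on I W"
  shows "\<exists>p\<in>W. \<forall>w\<in>W. inner_on I (\<lambda>i. y i - p i) w = 0"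
  using assms
proof (induction I arbitrary: W y rule: finite_induct)
  case empty
  then show ?case unfolding subspace_on_def inner_on_def by auto
next
  case (insert i J)
  define W0 where "W0 = {w\<in>W. w i = 0}"
  have W0: "subspace_on J W0"
    using insert.prems unfolding subspace_on_def W0_def by auto
  have inner_W0: "inner_on (insert i J) x w = inner_on J x w" if "w \<in> W" "w i = 0" for w x
    using that insert.hyps by (simp add: inner_on_def)
  obtain p0 where p0: "p0 \<in> W0" "\<forall>w\<in>W0. inner_on J (\<lambda>k. y k - p0 k) w = 0"
    using insert.IH[OF W0] by blast
  show ?case
  proof (cases "\<forall>w\<in>W. w i = 0")
    case True
    then show ?thesis using p0 inner_W0 unfolding W0_def by auto
  next
    case False
    then obtain u where u: "u \<in> W" "u i \<noteq> 0" by auto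
    obtain q where q: "q \<in> W0" "\<forall>w\<in>W0. inner_on J (\<lambda>k. u k - q k) w = 0"
      using insert.IH[OF W0] by blast
    have "(\<lambda>k. u k - 1 * q k) \<in> W"
      using subspace_on_diff[OF insert.prems u(1)] q(1) unfolding W0_def by blast
    moreover have "u i - q i \<noteq> 0" using u q(1) unfolding W0_def by simp
    moreover have "\<forall>w\<in>W. w i = 0 \<longrightarrow> inner_on (insert i J) (\<lambda>k. u k - q k) w = 0"
      using q(2) inner_W0 unfolding W0_def by auto
    ultimately show ?thesis
      using orth_proj_exists_extend[of "insert i J" i W p0 y "\<lambda>k. u k - q k"] insert.hyps
        insert.prems p0 inner_W0 unfolding W0_def by auto
  qed
qed

lemma orth_proj_unique:
  assumes "finite I" "subspace_on I W"
    and "p \<in> W" "\<forall>w\<in>W. inner_on I (\<lambda>i. y i - p i) w = 0"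
    and "p' \<in> W" "\<forall>w\<in>W. inner_on I (\<lambda>i. y i - p' i) w = 0"
  shows "p' = p"
proof -
  define d where "d = (\<lambda>k. p' k - 1 * p k)"
  have dW: "d \<in> W" unfolding d_def using subspace_on_diff assms by blast
  have "inner_on I d d = inner_on I (\<lambda>k. y k - p k) d - inner_on I (\<lambda>k. y k - p' k) d"
    unfolding inner_on_def d_def by (simp add: sum_subtractf[symmetric] algebra_simps)
  then have "(\<Sum>k\<in>I. d k * d k) = 0" using assms dW unfolding inner_on_def by simp
  then have "\<forall>k\<in>I. d k = 0" using assms(1) by (subst (asm) sum_nonneg_eq_0_iff) auto
  moreover have "\<forall>k. k \<notin> I \<longrightarrow> d k = 0" using dW assms(2) unfolding subspace_on_def by blast
  ultimately show ?thesis unfolding d_def by fastforce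
qed

lemma orth_proj:
  assumes "finite I" "subspace_on I W"
  shows "orth_proj I W y \<in> W \<and> (\<forall>w\<in>W. inner_on I (\<lambda>i. y i - orth_proj I W y i) w = 0)"
proof -
  have "\<exists>!p. p \<in> W \<and> (\<forall>w\<in>W. inner_on I (\<lambda>i. y i - p i) w = 0)"
    using orth_proj_exists[OF assms] orth_proj_unique[OF assms] by blast
  then show ?thesis unfolding orth_proj_def inner_on_def by (rule theI')
qed

lemma inner_orth_proj:
  assumes "finite I" "subspace_on I W" "w \<in> W"
  shows "inner_on I (orth_proj I W y) w = inner_on I y w"
  using orth_proj[OF assms(1,2), of y] assms(3)
  by (simp add: inner_on_diff_left[where c = 1, simplified])

lemma inner_vertex_state:
  assumes "finite I" "e \<in> I"
  shows "inner_on I (vertex_state e) w = w e"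
proof -
  have "inner_on I (vertex_state e) w = (\<Sum>i\<in>I. if i = e then w i else 0)"
    unfolding inner_on_def by (intro sum.cong) (auto simp: vertex_state_def)
  then show ?thesis using assms by simp
qed

lemma subspace_on_eigenspace: "subspace_on I (eigenspace_on I M \<theta>)"
proof -
  have "(\<Sum>j\<in>I. M i j * (x j + c * y j)) = (\<Sum>j\<in>I. M i j * x j) + c * (\<Sum>j\<in>I. M i j * y j)"
    for i c x y
    by (simp add: sum.distrib sum_distrib_left algebra_simps)
  then show ?thesis
    unfolding subspace_on_def eigenspace_on_def by (auto simp: algebra_simps)
qed

lemma strongly_cospectral_eigenvector_abs:
  assumes "finite I" "e \<in> I" "f \<in> I"
    and "strongly_cospectral I M (vertex_state e) (vertex_state f)"
    and w: "w \<in> eigenspace_on I M \<theta>"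
  shows "\<bar>w e\<bar> = \<bar>w f\<bar>"
proof (cases "w = (\<lambda>_. 0)")
  case False
  then have "is_eigenvalue_on I M \<theta>" unfolding is_eigenvalue_on_def using w by blast
  then consider "spectral_proj I M \<theta> (vertex_state e) = spectral_proj I M \<theta> (vertex_state f)"
    | "spectral_proj I M \<theta> (vertex_state e) = (\<lambda>i. - spectral_proj I M \<theta> (vertex_state f) i)"
    using assms(4) unfolding strongly_cospectral_def by blast
  moreover have "w x = inner_on I (spectral_proj I M \<theta> (vertex_state x)) w" if "x \<in> I" for x
    using inner_orth_proj[OF assms(1) subspace_on_eigenspace w] inner_vertex_state[OF assms(1) that]
    unfolding spectral_proj_def by simp
  ultimately show ?thesis
    using assms(2,3) by cases (simp_all add: inner_on_def sum_negf)
qed simp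

lemma simple_graph_finite_edges: "simple_graph V F \<Longrightarrow> finite F"
  unfolding simple_graph_def by (meson Pow_iff finite_Pow_iff finite_subset subsetI)

lemma simple_graph_edge_neq: "simple_graph V F \<Longrightarrow> {x, y} \<in> F \<Longrightarrow> x \<noteq> y"
  unfolding simple_graph_def by fastforce

definition incidence :: "'a set set \<Rightarrow> ('a set \<Rightarrow> real) \<Rightarrow> 'a \<Rightarrow> real" where
  "incidence F u v = (\<Sum>f\<in>F. if v \<in> f then u f else 0)"

definition incidence_range :: "'a set set \<Rightarrow> ('a \<Rightarrow> real) set" where
  "incidence_range F = range (incidence F)"

lemma incidence_lincomb:
  "incidence F (\<lambda>f. u f + c * u' f) = (\<lambda>v. incidence F u v + c * incidence F u' v)"
proof
  fix v
  have "incidence F (\<lambda>f. u f + c * u' f) v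
          = (\<Sum>f\<in>F. (if v \<in> f then u f else 0) + c * (if v \<in> f then u' f else 0))"
    unfolding incidence_def by (intro sum.cong) auto
  then show "incidence F (\<lambda>f. u f + c * u' f) v = incidence F u v + c * incidence F u' v"
    by (simp add: incidence_def sum.distrib sum_distrib_left)
qed

lemma incidence_vertex_state:
  assumes "finite F" "{x, y} \<in> F" "x \<noteq> y"
  shows "incidence F (vertex_state {x, y}) = (\<lambda>v. vertex_state x v + vertex_state y v)"
proof
  fix v
  have "incidence F (vertex_state {x, y}) v
          = (\<Sum>f\<in>F. if f = {x, y} then (if v \<in> {x, y} then 1 else 0) else 0)"
    unfolding incidence_def by (intro sum.cong) (auto simp: vertex_state_def)
  then show "incidence F (vertex_state {x, y}) v = vertex_state x v + vertex_state y v"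
    using assms by (simp add: vertex_state_def)
qed

lemma incidence_restrict:
  assumes "finite E" "F \<subseteq> E"
  shows "incidence E (\<lambda>f. if f \<in> F then u f else 0) = incidence F u"
  unfolding incidence_def fun_eq_iff
  by (intro allI sum.mono_neutral_cong_right[OF assms]) auto

lemma line_adj_eq_incidence:
  assumes "\<forall>e\<in>E. card e = 2" "{p, q} \<in> E" "p \<noteq> q" "f \<in> E"
  shows "line_adj E {p, q} f
           = (if p \<in> f then 1 else 0) + (if q \<in> f then 1 else 0) - 2 * vertex_state {p, q} f"
proof (cases "f = {p, q}")
  case False
  have "\<not> {p, q} \<subseteq> f"
  proof
    assume "{p, q} \<subseteq> f"
    moreover have "card f = 2" "card {p, q} = 2" using assms by auto
    ultimately show False using False card_subset_eq card.infinite by (metis zero_neq_numeral)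
  qed
  then show ?thesis using False assms(2,4) by (auto simp: line_adj_def vertex_state_def)
qed (use assms in \<open>simp add: line_adj_def vertex_state_def\<close>)

lemma incidence_kernel_eigenspace:
  assumes "simple_graph V E" "\<forall>f. f \<notin> E \<longrightarrow> w f = 0" "incidence E w = (\<lambda>_. 0)"
  shows "w \<in> eigenspace_on E (line_adj E) (-2)"
  unfolding eigenspace_on_def
proof (intro CollectI conjI ballI)
  have edges: "\<forall>e\<in>E. card e = 2" using assms(1) unfolding simple_graph_def by blast
  have "finite E" using assms(1) by (rule simple_graph_finite_edges)
  fix e assume "e \<in> E"
  then obtain p q where pq: "e = {p, q}" "p \<noteq> q" using edges card_2_iff by metis
  have "line_adj E e f * w f = (if p \<in> f then w f else 0) + (if q \<in> f then w f else 0)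
                                - 2 * (vertex_state e f * w f)" if "f \<in> E" for f
  proof -
    have "line_adj E e f
            = (if p \<in> f then 1 else 0) + (if q \<in> f then 1 else 0) - 2 * vertex_state e f"
      using line_adj_eq_incidence[of E p q f] edges \<open>e \<in> E\<close> pq that by simp
    then show ?thesis by (simp add: left_diff_distrib distrib_right)
  qed
  then have "(\<Sum>f\<in>E. line_adj E e f * w f)
          = (\<Sum>f\<in>E. (if p \<in> f then w f else 0) + (if q \<in> f then w f else 0)
                      - 2 * (vertex_state e f * w f))"
    by (intro sum.cong) auto
  also have "\<dots> = incidence E w p + incidence E w q - 2 * inner_on E (vertex_state e) w"
    by (simp add: incidence_def inner_on_def sum.distrib sum_subtractf sum_distrib_left)
  also have "\<dots> = - 2 * w e"
    using assms(3) inner_vertex_state[OF \<open>finite E\<close> \<open>e \<in> E\<close>] by (simp add: fun_eq_iff)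
  finally show "(\<Sum>f\<in>E. line_adj E e f * w f) = - 2 * w e" .
qed (use assms(2) in blast)

lemma incidence_range_lincomb:
  assumes "g \<in> incidence_range F" "h \<in> incidence_range F"
  shows "(\<lambda>v. g v + c * h v) \<in> incidence_range F"
proof -
  obtain u u' where "g = incidence F u" "h = incidence F u'"
    using assms unfolding incidence_range_def by blast
  then have "(\<lambda>v. g v + c * h v) = incidence F (\<lambda>f. u f + c * u' f)"
    by (simp add: incidence_lincomb)
  then show ?thesis unfolding incidence_range_def by simp
qed

lemma edge_in_incidence_range:
  assumes "finite F" "{x, y} \<in> F" "x \<noteq> y"
  shows "(\<lambda>v. vertex_state x v + vertex_state y v) \<in> incidence_range F"
  unfolding incidence_range_def incidence_vertex_state[OF assms, symmetric] by simp

lemma walk_in_incidence_range: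
  assumes "simple_graph V F" "(adj F)\<^sup>*\<^sup>* a v"
  shows "(\<lambda>x. vertex_state a x + vertex_state v x) \<in> incidence_range F
       \<or> (\<lambda>x. vertex_state a x - vertex_state v x) \<in> incidence_range F"
  using assms(2)
proof (induction rule: rtranclp_induct)
  case base
  have "(\<lambda>x. vertex_state a x - vertex_state a x) = incidence F (\<lambda>_. 0)"
    by (simp add: fun_eq_iff incidence_def)
  then show ?case unfolding incidence_range_def by simp
next
  case (step y z)
  from \<open>adj F y z\<close> have e: "{y, z} \<in> F" unfolding adj_def .
  have yz: "(\<lambda>x. vertex_state y x + vertex_state z x) \<in> incidence_range F"
    using edge_in_incidence_range simple_graph_finite_edges[OF assms(1)] e
      simple_graph_edge_neq[OF assms(1) e] .
  from step.IH show ?case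
  proof
    assume "(\<lambda>x. vertex_state a x + vertex_state y x) \<in> incidence_range F"
    from incidence_range_lincomb[OF this yz, of "-1"]
    have "(\<lambda>x. vertex_state a x - vertex_state z x) \<in> incidence_range F"
      by (simp add: algebra_simps)
    then show ?case ..
  next
    assume "(\<lambda>x. vertex_state a x - vertex_state y x) \<in> incidence_range F"
    from incidence_range_lincomb[OF this yz, of 1]
    have "(\<lambda>x. vertex_state a x + vertex_state z x) \<in> incidence_range F"
      by simp
    then show ?case ..
  qed
qed

text \<open>Colour \<open>v\<close> by whether \<open>e\<^sub>a - e\<^sub>v\<close> or \<open>e\<^sub>a + e\<^sub>v\<close> is in the range; an edge between equally
  coloured vertices would put \<open>2 e\<^sub>a\<close> in the range.\<close>

lemma bipartite_if_vertex_state_notin_incidence_range: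
  assumes "simple_graph V F" "connected_graph V F" "a \<in> V"
    and a_notin: "vertex_state a \<notin> incidence_range F"
  shows "bipartite_graph V F"
  unfolding bipartite_graph_def
proof (intro exI ballI impI)
  let ?R = "incidence_range F"
  let ?colour = "\<lambda>v. (\<lambda>x. vertex_state a x - vertex_state v x) \<in> ?R"
  have twice_a: "(\<lambda>x. 2 * vertex_state a x) \<notin> ?R"
  proof
    assume "(\<lambda>x. 2 * vertex_state a x) \<in> ?R"
    from incidence_range_lincomb[OF this this, of "- 1/2"] have "vertex_state a \<in> ?R"
      by simp
    with a_notin show False ..
  qed
  fix u v assume uv: "u \<in> V" "v \<in> V" "{u, v} \<in> F"
  have edge: "(\<lambda>x. vertex_state u x + vertex_state v x) \<in> ?R"
    using edge_in_incidence_range simple_graph_finite_edges[OF assms(1)] uv(3)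
      simple_graph_edge_neq[OF assms(1) uv(3)] .
  show "?colour u \<noteq> ?colour v"
  proof (cases "?colour u")
    case True
    from incidence_range_lincomb[OF this edge, of 1]
    have plus_v: "(\<lambda>x. vertex_state a x + vertex_state v x) \<in> ?R" by simp
    have "\<not> ?colour v"
    proof
      assume "?colour v"
      from incidence_range_lincomb[OF plus_v this, of 1] twice_a show False by simp
    qed
    with True show ?thesis by blast
  next
    case False
    then have "(\<lambda>x. vertex_state a x + vertex_state u x) \<in> ?R"
      using walk_in_incidence_range[OF assms(1)] assms(2,3) uv(1)
      unfolding connected_graph_def by blast
    from incidence_range_lincomb[OF this edge, of "-1"] have "?colour v"
      by (simp add: algebra_simps)
    with False show ?thesis by blast
  qed
qed

lemma vertex_state_in_incidence_range:
  assumes "simple_graph V F" "connected_graph V F" "\<not> bipartite_graph V F" "a \<in> V"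
  shows "vertex_state a \<in> incidence_range F"
  using bipartite_if_vertex_state_notin_incidence_range[OF assms(1,2,4)] assms(3) by blast

lemma minus_two_eigenvector_on_edge:
  assumes "simple_graph V E" "{a, b} \<in> E" "F \<subseteq> E" "{a, b} \<notin> F"
    and "vertex_state a \<in> incidence_range F" "vertex_state b \<in> incidence_range F"
  shows "\<exists>w\<in>eigenspace_on E (line_adj E) (-2).
           w {a, b} = 1 \<and> (\<forall>f. f \<notin> insert {a, b} F \<longrightarrow> w f = 0)"
proof -
  have "finite E" using assms(1) by (rule simple_graph_finite_edges)
  from incidence_range_lincomb[OF assms(5,6), of 1]
  obtain u where u: "incidence F u = (\<lambda>v. vertex_state a v + vertex_state b v)"
    unfolding incidence_range_def by auto
  define w where "w = (\<lambda>f. vertex_state {a, b} f + (-1) * (if f \<in> F then u f else 0))"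
  have "w \<in> eigenspace_on E (line_adj E) (-2)"
  proof (rule incidence_kernel_eigenspace[OF assms(1)])
    show "\<forall>f. f \<notin> E \<longrightarrow> w f = 0"
      using assms(2,3) by (auto simp: w_def vertex_state_def)
    show "incidence E w = (\<lambda>_. 0)"
      unfolding w_def incidence_lincomb incidence_restrict[OF \<open>finite E\<close> assms(3)] u
        incidence_vertex_state[OF \<open>finite E\<close> assms(2) simple_graph_edge_neq[OF assms(1,2)]]
      by simp
  qed
  moreover have "w {a, b} = 1" using assms(4) by (simp add: w_def vertex_state_def)
  moreover have "\<forall>f. f \<notin> insert {a, b} F \<longrightarrow> w f = 0" by (simp add: w_def vertex_state_def)
  ultimately show ?thesis by blast
qed

theorem mainTheorem14:
  fixes V :: "'a set" and E :: "'a set set" and a b \<alpha> \<beta> :: 'a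
  assumes "simple_graph V E"
    and "connected_graph V E"
    and "\<not> bipartite_graph V E"
    and "card E > card V"
    and "{a, b} \<in> E" and "{\<alpha>, \<beta>} \<in> E" and "{a, b} \<noteq> {\<alpha>, \<beta>}"
    and "strongly_cospectral E (line_adj E) (vertex_state {a, b}) (vertex_state {\<alpha>, \<beta>})"
  shows "\<not> connected_graph V (E - {{a, b}, {\<alpha>, \<beta>}}) \<or> bipartite_graph V (E - {{a, b}, {\<alpha>, \<beta>}})"
proof -
  define F where "F = E - {{a, b}, {\<alpha>, \<beta>}}"
  have "\<not> (connected_graph V F \<and> \<not> bipartite_graph V F)"
  proof
    assume F: "connected_graph V F \<and> \<not> bipartite_graph V F"
    have "simple_graph V F" using assms(1) unfolding simple_graph_def F_def by auto
    moreover have "a \<in> V" "b \<in> V" using assms(1,5) unfolding simple_graph_def by auto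
    ultimately have in_range: "vertex_state a \<in> incidence_range F" "vertex_state b \<in> incidence_range F"
      using vertex_state_in_incidence_range[of V F] F by simp_all
    have "F \<subseteq> E" "{a, b} \<notin> F" unfolding F_def by auto
    then obtain w where w: "w \<in> eigenspace_on E (line_adj E) (-2)" "w {a, b} = 1"
      "\<forall>f. f \<notin> insert {a, b} F \<longrightarrow> w f = 0"
      using minus_two_eigenvector_on_edge[OF assms(1,5) _ _ in_range] by blast
    have "{\<alpha>, \<beta>} \<notin> insert {a, b} F" using assms(7) unfolding F_def by auto
    then have "w {\<alpha>, \<beta>} = 0" using w(3) by simp
    moreover have "\<bar>w {a, b}\<bar> = \<bar>w {\<alpha>, \<beta>}\<bar>"
      using strongly_cospectral_eigenvector_abs[OF simple_graph_finite_edges[OF assms(1)]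
          assms(5,6,8) w(1)] .
    ultimately show False using w(2) by simp
  qed
  then show ?thesis unfolding F_def by blast
qed

end
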